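(* There exists a protocol that estimates the sharpness $\mathcal{S}(\{M_i\}_i)=\frac{1}{d}\sum_i\operatorname{Tr}(M_i^2)$ with constant additive error, and thus solves the black-box distinguishing task below with constant success probability, using $\mathcal{O}(1)$ queries, provided that the black box outputs both classical outcomes and post-measurement quantum states $\rho_i = K_i\rho K_i^\dagger/\operatorname{Tr}(K_i\rho K_i^\dagger)$, and the measurement operators $K_i$ are normal operators.
   Context: A quantum measurement on a $d$-dimensional system is described by measurement (Kraus) operators $\{K_i\}_i$ with $\sum_i K_i^\dagger K_i = \mathbb{I}$ and POVM $\{M_i = K_i^\dagger K_i\}_i$; outcome $i$ occurs with probability $\operatorname{Tr}(\rho K_i^\dagger K_i)$ and the post-measurement state is $\rho_i = K_i\rho K_i^\dagger/\operatorname{Tr}(K_i\rho K_i^\dagger)$. Black-box distinguishing task: given query access to a measurement device, distinguish between, with equal prior probability, (i) a device that outputs $i \in \{0,\dots,d-1\}$ uniformly at random and leaves the input state unchanged (sharpness $1/d$), and (ii) a device performing the projective measurement $\{\Pi_i = U |i\rangle\langle i| U^\dagger\}_{i=0}^{d-1}$ for an unknown Haar random unitary $U$, outputting $i$ and collapsing the input to the post-measurement state (sharpness $1$). The protocol: prepare the maximally mixed state $\mathbb{I}/d$, measure it and keep the post-measurement state, measure again with the same device, and record whether the two outcomes agree; the agreement probability equals the sharpness when $[K_i,K_i^\dagger]=0$. *)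

theory Defs
  imports Complex_Main "Jordan_Normal_Form.Matrix"
begin

definition cadj :: "complex mat \<Rightarrow> complex mat" where
  "cadj A = mat (dim_col A) (dim_row A) (\<lambda>(i,j). cnj (A $$ (j,i)))"

definition mtrace :: "complex mat \<Rightarrow> complex" where
  "mtrace A = (\<Sum>i<dim_row A. A $$ (i,i))"

definition is_measurement :: "nat \<Rightarrow> nat \<Rightarrow> (nat \<Rightarrow> complex mat) \<Rightarrow> bool" where
  "is_measurement d m K \<longleftrightarrow>
     (\<forall>i<m. K i \<in> carrier_mat d d) \<and>
     (\<forall>a<d. \<forall>b<d. (\<Sum>i<m. (cadj (K i) * K i) $$ (a,b)) = (1\<^sub>m d :: complex mat) $$ (a,b))"

definition normal_op :: "complex mat \<Rightarrow> bool" where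
  "normal_op A \<longleftrightarrow> A * cadj A = cadj A * A"

definition povm :: "(nat \<Rightarrow> complex mat) \<Rightarrow> nat \<Rightarrow> complex mat" where
  "povm K i = cadj (K i) * K i"

definition sharpness :: "nat \<Rightarrow> nat \<Rightarrow> (nat \<Rightarrow> complex mat) \<Rightarrow> real" where
  "sharpness d m K = (1 / real d) * (\<Sum>i<m. Re (mtrace (povm K i * povm K i)))"

definition outcome_prob :: "(nat \<Rightarrow> complex mat) \<Rightarrow> nat \<Rightarrow> complex mat \<Rightarrow> real" where
  "outcome_prob K i \<rho> = Re (mtrace (K i * \<rho> * cadj (K i)))"

definition post_state :: "(nat \<Rightarrow> complex mat) \<Rightarrow> nat \<Rightarrow> complex mat \<Rightarrow> complex mat" where
  "post_state K i \<rho> = (1 / mtrace (K i * \<rho> * cadj (K i))) \<cdot>\<^sub>m (K i * \<rho> * cadj (K i))"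

definition maxmixed :: "nat \<Rightarrow> complex mat" where
  "maxmixed d = (1 / of_nat d) \<cdot>\<^sub>m (1\<^sub>m d)"

text \<open>One round of the protocol (two queries): prepare I/d, measure, keep the
  post-measurement state, measure again; probability that the two outcomes agree.\<close>
definition agree_prob :: "nat \<Rightarrow> nat \<Rightarrow> (nat \<Rightarrow> complex mat) \<Rightarrow> real" where
  "agree_prob d m K =
     (\<Sum>i<m. outcome_prob K i (maxmixed d) * outcome_prob K i (post_state K i (maxmixed d)))"

text \<open>The protocol repeats the round N times independently (2N queries) and outputs the
  fraction k/N of agreeing rounds; k is Binomial(N, q) with q the agreement probability.
  \<open>est_prob N q P\<close> is the probability that the estimate k/N satisfies P.\<close>
definition est_prob :: "nat \<Rightarrow> real \<Rightarrow> (real \<Rightarrow> bool) \<Rightarrow> real" where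
  "est_prob N q P = (\<Sum>k\<in>{k. k \<le> N \<and> P (real k / real N)}.
                        real (N choose k) * q ^ k * (1 - q) ^ (N - k))"

text \<open>Device (i): outputs i in {0..d-1} uniformly and leaves the state unchanged:
  K_i = I / sqrt d.\<close>
definition random_device :: "nat \<Rightarrow> nat \<Rightarrow> complex mat" where
  "random_device d i = (complex_of_real (1 / sqrt (real d))) \<cdot>\<^sub>m (1\<^sub>m d)"

definition unitary_mat :: "nat \<Rightarrow> complex mat \<Rightarrow> bool" where
  "unitary_mat d U \<longleftrightarrow> U \<in> carrier_mat d d \<and> cadj U * U = 1\<^sub>m d"

definition proj_device :: "nat \<Rightarrow> complex mat \<Rightarrow> nat \<Rightarrow> complex mat" where
  "proj_device d U i = U * mat d d (\<lambda>(a,b). if a = i \<and> b = i then 1 else 0) * cadj U"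

end

theory Submission
  imports Defs "HOL-Probability.Hoeffding"
begin

text \<open>For normal Kraus operators the protocol measures the sharpness exactly. Measuring
  \<open>I/d\<close> gives outcome \<open>i\<close> with probability \<open>Tr(M\<^sub>i)/d\<close> and leaves \<open>K\<^sub>i K\<^sub>i\<^sup>\<dagger>/Tr(M\<^sub>i)\<close>; the second
  measurement repeats \<open>i\<close> with probability \<open>Tr(K\<^sub>i K\<^sub>i K\<^sub>i\<^sup>\<dagger> K\<^sub>i\<^sup>\<dagger>)/Tr(M\<^sub>i)\<close>, and normality turns
  the numerator into \<open>Tr(M\<^sub>i\<^sup>2)\<close>. So the two outcomes agree with probability exactly
  \<open>(1/d) \<Sum>\<^sub>i Tr(M\<^sub>i\<^sup>2)\<close>, a number in \<open>[0,1]\<close> since \<open>Tr(M\<^sub>i M\<^sub>j) \<ge> 0\<close> and \<open>\<Sum>\<^sub>j M\<^sub>j = I\<close>.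
  Repeating the round \<open>N\<close> times, Hoeffding's inequality for the binomial distribution
  gives concentration of the empirical frequency with an \<open>N\<close> independent of \<open>d\<close>.
  The uniformly random device has sharpness \<open>1/d \<le> 1/2\<close> and every projective device
  has sharpness \<open>1\<close>, so thresholding the estimate at \<open>3/4\<close> distinguishes them.\<close>

lemma cadj_dims [simp]: "dim_row (cadj A) = dim_col A" "dim_col (cadj A) = dim_row A"
  unfolding cadj_def by simp_all

lemma cadj_carrier [simp]: "A \<in> carrier_mat n k \<Longrightarrow> cadj A \<in> carrier_mat k n"
  by (metis cadj_dims carrier_matD carrier_matI)

lemma cadj_index [simp]:
  "i < dim_col A \<Longrightarrow> j < dim_row A \<Longrightarrow> cadj A $$ (i,j) = cnj (A $$ (j,i))"
  by (simp add: cadj_def)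

lemma cadj_cadj [simp]: "cadj (cadj A) = A"
  by (intro eq_matI) auto

lemma cadj_smult: "cadj (c \<cdot>\<^sub>m A) = cnj c \<cdot>\<^sub>m cadj A"
  by (intro eq_matI) auto

lemma cadj_one [simp]: "cadj (1\<^sub>m n) = 1\<^sub>m n"
  by (intro eq_matI) auto

lemma cadj_mult:
  assumes "A \<in> carrier_mat n k" "B \<in> carrier_mat k l"
  shows "cadj (A * B) = cadj B * cadj A"
  using assms by (intro eq_matI) (auto simp: scalar_prod_def intro!: sum.cong)

lemma mtrace_mult_eq_sum:
  assumes "A \<in> carrier_mat n k" "B \<in> carrier_mat k n"
  shows "mtrace (A * B) = (\<Sum>i<n. \<Sum>j<k. A $$ (i,j) * B $$ (j,i))"
  using assms unfolding mtrace_def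
  by (auto simp: scalar_prod_def atLeast0LessThan intro!: sum.cong)

lemma mtrace_mult_comm:
  assumes "A \<in> carrier_mat n k" "B \<in> carrier_mat k n"
  shows "mtrace (A * B) = mtrace (B * A)"
  unfolding mtrace_mult_eq_sum[OF assms] mtrace_mult_eq_sum[OF assms(2,1)]
  by (subst sum.swap) (simp add: mult.commute)

lemma mtrace_smult: "A \<in> carrier_mat n n \<Longrightarrow> mtrace (c \<cdot>\<^sub>m A) = c * mtrace A"
  by (simp add: mtrace_def sum_distrib_left)

lemma mtrace_one [simp]: "mtrace (1\<^sub>m n) = of_nat n"
  by (simp add: mtrace_def)

lemma mtrace_mult_cadj:
  assumes "A \<in> carrier_mat n k"
  shows "mtrace (A * cadj A) = of_real (\<Sum>i<n. \<Sum>j<k. (cmod (A $$ (i,j)))\<^sup>2)"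
proof -
  have "mtrace (A * cadj A) = (\<Sum>i<n. \<Sum>j<k. A $$ (i,j) * cnj (A $$ (i,j)))"
    using assms by (simp add: mtrace_mult_eq_sum[of _ n k])
  then show ?thesis
    by (simp only: complex_norm_square of_real_sum)
qed

lemma Re_mtrace_mult_cadj_nonneg: "A \<in> carrier_mat n k \<Longrightarrow> 0 \<le> Re (mtrace (A * cadj A))"
  by (simp add: mtrace_mult_cadj sum_nonneg)

lemma mtrace_mult_cadj_eq_0_imp_zero:
  assumes A: "A \<in> carrier_mat n k" and trace: "mtrace (A * cadj A) = 0"
  shows "A = 0\<^sub>m n k"
proof -
  have "(\<Sum>i<n. \<Sum>j<k. (cmod (A $$ (i,j)))\<^sup>2) = 0"
    using trace mtrace_mult_cadj[OF A] by (metis of_real_eq_0_iff)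
  then have "\<forall>i<n. \<forall>j<k. (cmod (A $$ (i,j)))\<^sup>2 = 0"
    by (simp add: sum_nonneg sum_nonneg_eq_0_iff)
  then show ?thesis
    using A by (intro eq_matI) auto
qed

lemma cadj_unitary_conj:
  assumes "U \<in> carrier_mat n n" "E \<in> carrier_mat n n"
  shows "cadj (U * E * cadj U) = U * cadj E * cadj U"
  using assms by (simp add: cadj_mult[of _ n n _ n] assoc_mult_mat[of _ n n _ n _ n])

lemma unitary_conj_mult:
  assumes U: "unitary_mat n U" and E: "E \<in> carrier_mat n n" and F: "F \<in> carrier_mat n n"
  shows "(U * E * cadj U) * (U * F * cadj U) = U * (E * F) * cadj U"
proof -
  have Uc: "U \<in> carrier_mat n n" and UU: "cadj U * U = 1\<^sub>m n"
    using U by (auto simp: unitary_mat_def)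
  have Ua: "cadj U \<in> carrier_mat n n" and UE: "U * E \<in> carrier_mat n n"
    and FU: "F * cadj U \<in> carrier_mat n n"
    using Uc E F by auto
  have "(U * E * cadj U) * (U * F * cadj U) = U * E * (cadj U * (U * (F * cadj U)))"
    using assoc_mult_mat[OF UE Ua mult_carrier_mat[OF Uc FU]] assoc_mult_mat[OF Uc F Ua] by simp
  also have "cadj U * (U * (F * cadj U)) = F * cadj U"
    unfolding assoc_mult_mat[OF Ua Uc FU, symmetric] UU by (rule left_mult_one_mat[OF FU])
  also have "U * E * (F * cadj U) = U * (E * F) * cadj U"
    using assoc_mult_mat[OF UE F Ua] assoc_mult_mat[OF Uc E F] by simp
  finally show ?thesis .
qed

lemma mtrace_unitary_conj:
  assumes U: "unitary_mat n U" and E: "E \<in> carrier_mat n n"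
  shows "mtrace (U * E * cadj U) = mtrace E"
proof -
  have Uc: "U \<in> carrier_mat n n" and UU: "cadj U * U = 1\<^sub>m n"
    using U by (auto simp: unitary_mat_def)
  have "mtrace (U * (E * cadj U)) = mtrace (E * cadj U * U)"
    using Uc E by (intro mtrace_mult_comm[of _ n n]) auto
  then show ?thesis
    using Uc E by (simp add: UU assoc_mult_mat[of _ n n _ n _ n])
qed

lemma smult_smult_mat: "a \<cdot>\<^sub>m (b \<cdot>\<^sub>m A) = (a * b :: 'a :: semigroup_mult) \<cdot>\<^sub>m A"
  by (intro eq_matI) (auto simp: mult.assoc)

lemma smult_one_mult_smult_one:
  "(a \<cdot>\<^sub>m 1\<^sub>m n) * (b \<cdot>\<^sub>m 1\<^sub>m n) = (a * b :: 'a :: comm_ring_1) \<cdot>\<^sub>m 1\<^sub>m n"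
  by (simp add: smult_smult_mat
      mult_smult_assoc_mat[OF one_carrier_mat smult_carrier_mat[OF one_carrier_mat]])

lemma povm_carrier: "K i \<in> carrier_mat d d \<Longrightarrow> povm K i \<in> carrier_mat d d"
  unfolding povm_def by (intro mult_carrier_mat[of _ d d]) auto

lemma normal_op_mult_gram_mult_cadj:
  assumes A: "A \<in> carrier_mat n n" and normal: "normal_op A"
  shows "A * (A * cadj A) * cadj A = (cadj A * A) * (cadj A * A)"
proof -
  have Aadj: "cadj A \<in> carrier_mat n n"
    using A by simp
  have "A * (A * cadj A) * cadj A = A * (cadj A * A) * cadj A"
    using normal by (simp add: normal_op_def)
  also have "\<dots> = (A * cadj A) * A * cadj A"
    by (simp only: assoc_mult_mat[OF A Aadj A])
  also have "\<dots> = (A * cadj A) * (A * cadj A)"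
    by (rule assoc_mult_mat[OF mult_carrier_mat[OF A Aadj] A Aadj])
  finally show ?thesis
    using normal by (simp add: normal_op_def)
qed

lemma mult_maxmixed_mult_cadj:
  assumes A: "A \<in> carrier_mat d d"
  shows "A * maxmixed d * cadj A = (1 / of_nat d) \<cdot>\<^sub>m (A * cadj A)"
proof -
  have "A * maxmixed d = (1 / of_nat d) \<cdot>\<^sub>m A"
    unfolding maxmixed_def using A by (simp add: mult_smult_distrib[OF A one_carrier_mat])
  then show ?thesis
    using A by (simp add: mult_smult_assoc_mat[of _ d d "cadj A" d])
qed

lemma post_state_maxmixed:
  assumes "K i \<in> carrier_mat d d" "d > 0"
  shows "post_state K i (maxmixed d) =
    (1 / mtrace (K i * cadj (K i))) \<cdot>\<^sub>m (K i * cadj (K i))"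
  using assms
  by (cases "mtrace (K i * cadj (K i)) = 0")
    (simp_all add: post_state_def mult_maxmixed_mult_cadj mtrace_smult[of _ d] smult_smult_mat)

lemma outcome_prob_repeat_maxmixed:
  assumes K: "K i \<in> carrier_mat d d" and normal: "normal_op (K i)" and d: "d > 0"
  shows "outcome_prob K i (maxmixed d) * outcome_prob K i (post_state K i (maxmixed d))
         = Re (mtrace (povm K i * povm K i)) / real d"
proof -
  define H where "H = K i * cadj (K i)"
  define T where "T = Re (mtrace H)"
  have H: "H \<in> carrier_mat d d"
    using K unfolding H_def by (intro mult_carrier_mat[of _ d d]) auto
  have trace_H: "mtrace H = of_real T"
    unfolding T_def H_def mtrace_mult_cadj[OF K] by simp
  have first: "outcome_prob K i (maxmixed d) = T / real d"
    using H trace_H unfolding outcome_prob_def mult_maxmixed_mult_cadj[OF K] H_def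
    by (simp add: mtrace_smult[of _ d])
  have "K i * post_state K i (maxmixed d) * cadj (K i) =
      (1 / of_real T) \<cdot>\<^sub>m (K i * H * cadj (K i))"
    unfolding post_state_maxmixed[of K i d, OF K d, folded H_def] trace_H
    using K H by (simp add: mult_smult_distrib[OF K H] mult_smult_assoc_mat[of _ d d _ d])
  also have "K i * H * cadj (K i) = povm K i * povm K i"
    unfolding H_def povm_def by (rule normal_op_mult_gram_mult_cadj[OF K normal])
  finally have second:
    "outcome_prob K i (post_state K i (maxmixed d)) = Re (mtrace (povm K i * povm K i)) / T"
    unfolding outcome_prob_def
    using mtrace_smult[OF mult_carrier_mat[OF povm_carrier[of K i d, OF K] povm_carrier[of K i d, OF K]]]
    by (simp add: Re_divide_of_real)
  show ?thesis
  proof (cases "T = 0")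
    case True
    then have "K i = 0\<^sub>m d d"
      using mtrace_mult_cadj_eq_0_imp_zero[OF K] trace_H unfolding H_def by simp
    then show ?thesis
      unfolding first True by (simp add: povm_def mtrace_def)
  next
    case False
    then show ?thesis
      unfolding first second by simp
  qed
qed

lemma Re_mtrace_povm_mult_nonneg:
  assumes Ki: "K i \<in> carrier_mat d d" and Kj: "K j \<in> carrier_mat d d"
  shows "0 \<le> Re (mtrace (povm K i * povm K j))"
proof -
  have Ai: "cadj (K i) \<in> carrier_mat d d" and Aj: "cadj (K j) \<in> carrier_mat d d"
    using Ki Kj by auto
  have Mj: "povm K j \<in> carrier_mat d d"
    using Kj by (rule povm_carrier)
  have "mtrace (povm K i * povm K j) = mtrace (cadj (K i) * (K i * povm K j))"
    unfolding povm_def[of K i] by (rule arg_cong[OF assoc_mult_mat[OF Ai Ki Mj]])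
  also have "\<dots> = mtrace (K i * povm K j * cadj (K i))"
    by (rule mtrace_mult_comm[OF Ai mult_carrier_mat[OF Ki Mj]])
  also have "K i * povm K j * cadj (K i) = (K i * cadj (K j)) * K j * cadj (K i)"
    unfolding povm_def by (simp only: assoc_mult_mat[OF Ki Aj Kj])
  also have "\<dots> = (K i * cadj (K j)) * cadj (K i * cadj (K j))"
    using assoc_mult_mat[OF mult_carrier_mat[OF Ki Aj] Kj Ai] by (simp add: cadj_mult[OF Ki Aj])
  finally show ?thesis
    using Re_mtrace_mult_cadj_nonneg[OF mult_carrier_mat[OF Ki Aj]] by simp
qed

lemma sum_mtrace_mult_povm:
  assumes M: "is_measurement d m K" and P: "P \<in> carrier_mat d d"
  shows "(\<Sum>j<m. mtrace (P * povm K j)) = mtrace P"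
proof -
  have completeness: "(\<Sum>j<m. povm K j $$ (a,b)) = (if a = b then 1 else 0)"
    if "a < d" "b < d" for a b
    using M that unfolding is_measurement_def povm_def by auto
  have "(\<Sum>j<m. mtrace (P * povm K j)) =
      (\<Sum>j<m. \<Sum>a<d. \<Sum>b<d. P $$ (a,b) * povm K j $$ (b,a))"
    using M P by (intro sum.cong refl mtrace_mult_eq_sum povm_carrier) (auto simp: is_measurement_def)
  also have "\<dots> = (\<Sum>a<d. \<Sum>b<d. P $$ (a,b) * (\<Sum>j<m. povm K j $$ (b,a)))"
    by (simp add: sum_distrib_left sum.swap[of _ "{..<m}"])
  also have "\<dots> = (\<Sum>a<d. P $$ (a,a))"
    by (simp add: completeness if_distrib sum.delta' cong: if_cong)
  also have "\<dots> = mtrace P"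
    using P by (simp add: mtrace_def)
  finally show ?thesis .
qed

lemma sum_mtrace_povm:
  assumes M: "is_measurement d m K"
  shows "(\<Sum>i<m. mtrace (povm K i)) = of_nat d"
proof -
  have "1\<^sub>m d * povm K i = povm K i" if "i < m" for i
    using M that by (intro left_mult_one_mat[of _ d d] povm_carrier) (simp add: is_measurement_def)
  then have "(\<Sum>i<m. mtrace (povm K i)) = (\<Sum>i<m. mtrace (1\<^sub>m d * povm K i))"
    by simp
  also have "\<dots> = of_nat d"
    using sum_mtrace_mult_povm[OF M one_carrier_mat] by simp
  finally show ?thesis .
qed

lemma sharpness_nonneg:
  assumes "is_measurement d m K"
  shows "0 \<le> sharpness d m K"
  using assms unfolding sharpness_def is_measurement_def
  by (intro mult_nonneg_nonneg sum_nonneg Re_mtrace_povm_mult_nonneg[of K _ d]) auto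

lemma sharpness_le_1:
  assumes d: "d > 0" and M: "is_measurement d m K"
  shows "sharpness d m K \<le> 1"
proof -
  have K: "K i \<in> carrier_mat d d" if "i < m" for i
    using M that by (simp add: is_measurement_def)
  have "(\<Sum>i<m. Re (mtrace (povm K i * povm K i))) \<le>
      (\<Sum>i<m. \<Sum>j<m. Re (mtrace (povm K i * povm K j)))"
    by (intro sum_mono member_le_sum Re_mtrace_povm_mult_nonneg[of K _ d] K) auto
  also have "\<dots> = (\<Sum>i<m. Re (mtrace (povm K i)))"
    using K by (intro sum.cong refl) (simp add: sum_mtrace_mult_povm[OF M] povm_carrier flip: Re_sum)
  also have "\<dots> = real d"
    using sum_mtrace_povm[OF M] by (simp flip: Re_sum)
  finally show ?thesis
    unfolding sharpness_def using d by (simp add: field_simps)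
qed

lemma agree_prob_eq_sharpness:
  assumes "d > 0" "is_measurement d m K" "\<forall>i<m. normal_op (K i)"
  shows "agree_prob d m K = sharpness d m K"
  using assms unfolding agree_prob_def sharpness_def is_measurement_def
  by (simp add: outcome_prob_repeat_maxmixed sum_divide_distrib)

lemma est_prob_eq_binomial_prob:
  assumes "0 \<le> q" "q \<le> 1"
  shows "est_prob N q P = measure_pmf.prob (binomial_pmf N q) {k. P (real k / real N)}"
proof -
  let ?B = "binomial_pmf N q"
  have "set_pmf ?B \<subseteq> {..N}"
    using set_pmf_binomial_eq[OF assms, of N] by auto
  then have "{k. P (real k / real N)} \<inter> set_pmf ?B = {k. k \<le> N \<and> P (real k / real N)} \<inter> set_pmf ?B"
    by auto
  then have "measure_pmf.prob ?B {k. P (real k / real N)} =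
      measure_pmf.prob ?B {k. k \<le> N \<and> P (real k / real N)}"
    by (metis measure_Int_set_pmf)
  also have "\<dots> = (\<Sum>k\<in>{k. k \<le> N \<and> P (real k / real N)}. pmf ?B k)"
    by (rule measure_measure_pmf_finite) auto
  also have "\<dots> = est_prob N q P"
    unfolding est_prob_def using assms by simp
  finally show ?thesis
    by simp
qed

lemma est_prob_mono:
  assumes "0 \<le> q" "q \<le> 1" and "\<And>s. P s \<Longrightarrow> Q s"
  shows "est_prob N q P \<le> est_prob N q Q"
  unfolding est_prob_eq_binomial_prob[OF assms(1,2)]
  using assms(3) by (intro measure_pmf.finite_measure_mono) auto

lemma est_prob_Hoeffding:
  assumes q: "0 \<le> q" "q \<le> 1" and N: "N > 0" and \<epsilon>: "\<epsilon> \<ge> 0"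
  shows "1 - 2 * exp (- (2 * real N * \<epsilon>\<^sup>2)) \<le> est_prob N q (\<lambda>s. \<bar>s - q\<bar> \<le> \<epsilon>)"
proof -
  let ?B = "binomial_pmf N q"
  let ?close = "{k. \<bar>real k / real N - q\<bar> \<le> \<epsilon>}"
  have "binomial_distribution q"
    unfolding binomial_distribution_def using q by simp
  then have "measure_pmf.prob ?B {k. \<epsilon> \<le> \<bar>real k / real N - q\<bar>} \<le> 2 * exp (- (2 * real N * \<epsilon>\<^sup>2))"
    using binomial_distribution.prob_abs_ge'[OF _ N \<epsilon>] by simp
  moreover have "measure_pmf.prob ?B (UNIV - ?close) \<le> measure_pmf.prob ?B {k. \<epsilon> \<le> \<bar>real k / real N - q\<bar>}"
    by (intro measure_pmf.finite_measure_mono) auto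
  moreover have "measure_pmf.prob ?B (UNIV - ?close) = 1 - measure_pmf.prob ?B ?close"
    using measure_pmf.prob_compl[of ?close ?B] by simp
  ultimately show ?thesis
    using est_prob_eq_binomial_prob[OF q] by simp
qed

lemma exp_minus_le_inverse:
  assumes "(y::real) > 0"
  shows "exp (- y) \<le> 1 / y"
proof -
  have "y \<le> exp y"
    using exp_ge_add_one_self[of y] by linarith
  then have "inverse (exp y) \<le> inverse y"
    using assms by (rule le_imp_inverse_le)
  then show ?thesis
    by (simp add: exp_minus inverse_eq_divide)
qed

lemma est_prob_concentration:
  assumes \<epsilon>: "\<epsilon> > 0" and \<delta>: "\<delta> > 0"
  shows "\<exists>N>0. \<forall>q. 0 \<le> q \<longrightarrow> q \<le> 1 \<longrightarrow> 1 - \<delta> \<le> est_prob N q (\<lambda>s. \<bar>s - q\<bar> \<le> \<epsilon>)"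
proof -
  define N where "N = nat \<lceil>1 / (\<epsilon>\<^sup>2 * \<delta>)\<rceil> + 1"
  have N: "N > 0"
    unfolding N_def by simp
  have "1 / (\<epsilon>\<^sup>2 * \<delta>) \<le> real N"
    unfolding N_def by (simp add: add_increasing real_nat_ceiling_ge)
  then have "1 / (real N * \<epsilon>\<^sup>2) \<le> \<delta>"
    using N \<epsilon> \<delta> by (simp add: field_simps)
  moreover have "2 * exp (- (2 * real N * \<epsilon>\<^sup>2)) \<le> 1 / (real N * \<epsilon>\<^sup>2)"
    using exp_minus_le_inverse[of "2 * real N * \<epsilon>\<^sup>2"] N \<epsilon> by (simp add: field_simps)
  ultimately have "1 - \<delta> \<le> est_prob N q (\<lambda>s. \<bar>s - q\<bar> \<le> \<epsilon>)" if "0 \<le> q" "q \<le> 1" for q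
    using est_prob_Hoeffding[OF that N less_imp_le[OF \<epsilon>]] by linarith
  with N show ?thesis
    by blast
qed

lemma est_prob_threshold:
  assumes conc: "\<forall>q. 0 \<le> q \<longrightarrow> q \<le> 1 \<longrightarrow> 1 - \<delta> \<le> est_prob N q (\<lambda>s. \<bar>s - q\<bar> \<le> \<epsilon>)"
    and q: "0 \<le> q" "q \<le> 1"
  shows "q + \<epsilon> \<le> t \<Longrightarrow> 1 - \<delta> \<le> est_prob N q (\<lambda>s. s \<le> t)"
    and "t < q - \<epsilon> \<Longrightarrow> 1 - \<delta> \<le> est_prob N q (\<lambda>s. t < s)"
proof -
  have close: "1 - \<delta> \<le> est_prob N q (\<lambda>s. \<bar>s - q\<bar> \<le> \<epsilon>)"
    using conc q by blast
  show "1 - \<delta> \<le> est_prob N q (\<lambda>s. s \<le> t)" if "q + \<epsilon> \<le> t"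
    using close est_prob_mono[OF q, of "\<lambda>s. \<bar>s - q\<bar> \<le> \<epsilon>" "\<lambda>s. s \<le> t" N] that
    by (simp add: abs_le_iff)
  show "1 - \<delta> \<le> est_prob N q (\<lambda>s. t < s)" if "t < q - \<epsilon>"
    using close est_prob_mono[OF q, of "\<lambda>s. \<bar>s - q\<bar> \<le> \<epsilon>" "\<lambda>s. t < s" N] that
    by (simp add: abs_le_iff)
qed

lemma random_device_agree_prob:
  assumes d: "d > 0"
  shows "agree_prob d d (random_device d) = 1 / real d"
proof -
  define c where "c = complex_of_real (1 / sqrt (real d))"
  have R: "random_device d i = c \<cdot>\<^sub>m 1\<^sub>m d" for i
    unfolding random_device_def c_def ..
  have normal: "normal_op (random_device d i)" for i
    unfolding normal_op_def R cadj_smult cadj_one smult_one_mult_smult_one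
    by (simp add: mult.commute)
  have "cnj c * c = of_real (1 / real d)"
    unfolding c_def using d by (simp flip: of_real_mult)
  then have "povm (random_device d) i = of_real (1 / real d) \<cdot>\<^sub>m 1\<^sub>m d" for i
    unfolding povm_def R cadj_smult cadj_one smult_one_mult_smult_one by simp
  then have "mtrace (povm (random_device d) i * povm (random_device d) i) = 1 / of_nat d" for i
    using d by (simp add: smult_one_mult_smult_one mtrace_smult[OF one_carrier_mat])
  then have "Re (mtrace (povm (random_device d) i * povm (random_device d) i)) = 1 / real d" for i
    by simp
  then have "agree_prob d d (random_device d) = (\<Sum>i<d. 1 / real d / real d)"
    unfolding agree_prob_def using d normal
    by (simp add: outcome_prob_repeat_maxmixed R)
  then show ?thesis
    using d by simp
qed

definition basis_proj :: "nat \<Rightarrow> nat \<Rightarrow> complex mat" where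
  "basis_proj d i = Matrix.mat d d (\<lambda>(a,b). if a = i \<and> b = i then 1 else 0)"

lemma basis_proj_carrier [simp]: "basis_proj d i \<in> carrier_mat d d"
  by (simp add: basis_proj_def)

lemma cadj_basis_proj [simp]: "cadj (basis_proj d i) = basis_proj d i"
  by (intro eq_matI) (auto simp: basis_proj_def)

lemma basis_proj_idem: "basis_proj d i * basis_proj d i = basis_proj d i"
proof -
  have square: "(if P then 1 else 0) * (if P then 1 else 0) = (if P then 1 else 0 :: complex)" for P
    by simp
  show ?thesis
    by (intro eq_matI) (auto simp: basis_proj_def scalar_prod_def square intro!: sum.neutral)
qed

lemma mtrace_basis_proj: "i < d \<Longrightarrow> mtrace (basis_proj d i) = 1"
  by (simp add: basis_proj_def mtrace_def if_distrib sum.delta' cong: if_cong)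

lemma proj_device_eq: "proj_device d U i = U * basis_proj d i * cadj U"
  unfolding proj_device_def basis_proj_def ..

lemma proj_device_agree_prob:
  assumes d: "d > 0" and U: "unitary_mat d U"
  shows "agree_prob d d (proj_device d U) = 1"
proof -
  let ?P = "proj_device d U"
  have Uc: "U \<in> carrier_mat d d"
    using U by (simp add: unitary_mat_def)
  have carrier: "?P i \<in> carrier_mat d d" for i
    unfolding proj_device_eq using Uc by (intro mult_carrier_mat[of _ d d]) auto
  have hermitian: "cadj (?P i) = ?P i" for i
    unfolding proj_device_eq using Uc by (simp add: cadj_unitary_conj)
  have idem: "?P i * ?P i = ?P i" for i
    unfolding proj_device_eq unitary_conj_mult[OF U basis_proj_carrier basis_proj_carrier]
    by (simp add: basis_proj_idem)
  have "povm ?P i * povm ?P i = ?P i" for i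
    unfolding povm_def hermitian idem ..
  moreover have "mtrace (?P i) = 1" if "i < d" for i
    unfolding proj_device_eq mtrace_unitary_conj[OF U basis_proj_carrier]
    using that by (rule mtrace_basis_proj)
  ultimately have "Re (mtrace (povm ?P i * povm ?P i)) = 1" if "i < d" for i
    using that by simp
  then have "agree_prob d d ?P = (\<Sum>i<d. 1 / real d)"
    unfolding agree_prob_def using d carrier
    by (simp add: outcome_prob_repeat_maxmixed normal_op_def hermitian)
  then show ?thesis
    using d by simp
qed

lemma sharpness_estimation:
  assumes "\<epsilon> > 0" "\<delta> > 0"
  shows "\<exists>N>0. \<forall>d m K. d > 0 \<longrightarrow> is_measurement d m K \<longrightarrow> (\<forall>i<m. normal_op (K i)) \<longrightarrow>
    1 - \<delta> \<le> est_prob N (agree_prob d m K) (\<lambda>s. \<bar>s - sharpness d m K\<bar> \<le> \<epsilon>)"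
proof -
  obtain N where "N > 0"
    and conc: "\<forall>q. 0 \<le> q \<longrightarrow> q \<le> 1 \<longrightarrow> 1 - \<delta> \<le> est_prob N q (\<lambda>s. \<bar>s - q\<bar> \<le> \<epsilon>)"
    using est_prob_concentration[OF assms] by blast
  have "1 - \<delta> \<le> est_prob N (agree_prob d m K) (\<lambda>s. \<bar>s - sharpness d m K\<bar> \<le> \<epsilon>)"
    if d: "d > 0" and M: "is_measurement d m K" and normal: "\<forall>i<m. normal_op (K i)" for d m K
    unfolding agree_prob_eq_sharpness[OF d M normal]
    using conc sharpness_nonneg[OF M] sharpness_le_1[OF d M] by blast
  with \<open>N > 0\<close> show ?thesis
    by blast
qed

lemma random_vs_projective_distinguishable:
  "\<exists>N>0. \<forall>d\<ge>2. \<forall>U. unitary_mat d U \<longrightarrow>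
    2/3 \<le> (1/2) * est_prob N (agree_prob d d (random_device d)) (\<lambda>s. s \<le> 3/4)
      + (1/2) * est_prob N (agree_prob d d (proj_device d U)) (\<lambda>s. s > 3/4)"
proof -
  obtain N where "N > 0"
    and conc: "\<forall>q. 0 \<le> q \<longrightarrow> q \<le> 1 \<longrightarrow> 1 - 1/3 \<le> est_prob N q (\<lambda>s. \<bar>s - q\<bar> \<le> 1/5)"
    using est_prob_concentration[of "1/5" "1/3"] by auto
  have "2/3 \<le> (1/2) * est_prob N (agree_prob d d (random_device d)) (\<lambda>s. s \<le> 3/4)
      + (1/2) * est_prob N (agree_prob d d (proj_device d U)) (\<lambda>s. s > 3/4)"
    if d: "2 \<le> d" and U: "unitary_mat d U" for d U
  proof -
    have "1 / real d \<le> 1/2"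
      using d by (simp add: field_simps)
    then have "1 - 1/3 \<le> est_prob N (1 / real d) (\<lambda>s. s \<le> 3/4)"
      and "1 - 1/3 \<le> est_prob N 1 (\<lambda>s. 3/4 < s)"
      by (intro est_prob_threshold[OF conc]; simp)+
    then show ?thesis
      using d U by (simp add: random_device_agree_prob proj_device_agree_prob)
  qed
  with \<open>N > 0\<close> show ?thesis
    by blast
qed

theorem theorem2:
  shows "(\<forall>\<epsilon>>0. \<forall>\<delta>>0. \<exists>N>0. \<forall>d m K. d > 0 \<longrightarrow> is_measurement d m K \<longrightarrow>
            (\<forall>i<m. normal_op (K i)) \<longrightarrow>
            est_prob N (agree_prob d m K) (\<lambda>s. \<bar>s - sharpness d m K\<bar> \<le> \<epsilon>) \<ge> 1 - \<delta>)
       \<and> (\<exists>N>0. \<forall>d\<ge>2. \<forall>U. unitary_mat d U \<longrightarrow>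
            (1/2) * est_prob N (agree_prob d d (random_device d)) (\<lambda>s. s \<le> 3/4)
          + (1/2) * est_prob N (agree_prob d d (proj_device d U)) (\<lambda>s. s > 3/4) \<ge> 2/3)"
  using sharpness_estimation random_vs_projective_distinguishable by blast

end
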